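(* Let $p\ge 1$ be an integer, put $m:=2p+1$, and let $\theta:=e^{-\pi i/4}$. For $k=0,1,\dots,4p+1$ let $y_k:=-1+\frac{2k}{4p+1}$ and $\mu_k:=H(y_k)$, where $$H(y):=\int_{\mathbb{R}}\frac{e^{-2\pi x^2+2\pi\theta x y}}{\cosh(\pi\theta x)}\,dx=\frac{1}{\cos(\pi y)}\Big[\sqrt{2}\cos(\pi y/2)\,e^{-\frac{\pi i}{8}(4y^2+1)}-e^{-\frac{\pi i}{4}}\Big].$$ Let $L$ be the linear functional on the space of complex polynomials of degree at most $4p+1$ defined by $L[x^k]=\mu_k$ for $k=0,1,\dots,4p+1$. Let $P_{-1}\equiv 0$, $P_0\equiv 1$, and $P_{n+1}(x)=(x-a_n)P_n(x)-b_nP_{n-1}(x)$ for $n=0,1,\dots,m-1$, where $a_n=L[xP_n^2]/L[P_n^2]$ and $b_n=L[P_n^2]/L[P_{n-1}^2]$ (with $b_0$ arbitrary), and assume that $L[P_n^2]\neq 0$ for $0\le n\le m-1$, so that these monic polynomials are well defined; they satisfy $\deg P_n=n$ and $L[P_nQ]=0$ for every polynomial $Q$ of degree at most $n-1$, $1\le n\le m$. Then the polynomial $P_m$ satisfies $P_m(x)=-x^mP_m(1/x)$ for all $x\neq 0$.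
   Context: $\cosh$ and $\cos$ are the usual complex hyperbolic cosine and cosine; note $y_k\neq\pm 1/2$ for all $k$, so $\mu_k$ is well defined. The polynomials $P_n$ are the monic orthogonal polynomials with respect to the (generally non-positive) functional $L$. *)

theory Defs
  imports "HOL-Analysis.Analysis" "HOL-Computational_Algebra.Polynomial"
begin

text \<open>Closed form of H(y) (equal to the integral given in the paper).\<close>
definition H :: "real \<Rightarrow> complex" where
  "H y = (1 / complex_of_real (cos (pi * y))) *
     (complex_of_real (sqrt 2 * cos (pi * y / 2)) *
        exp (- (complex_of_real pi * \<i> / 8) * complex_of_real (4 * y\<^sup>2 + 1))
      - exp (- complex_of_real pi * \<i> / 4))"

definition ynode :: "nat \<Rightarrow> nat \<Rightarrow> real" where
  "ynode p k = -1 + 2 * real k / (4 * real p + 1)"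

definition moment :: "nat \<Rightarrow> nat \<Rightarrow> complex" where
  "moment p k = H (ynode p k)"

text \<open>The linear functional L with L[x^k] = moment p k (meaningful on degree \<le> 4p+1).\<close>
definition Lfun :: "nat \<Rightarrow> complex poly \<Rightarrow> complex" where
  "Lfun p q = (\<Sum>k\<le>degree q. coeff q k * moment p k)"

fun opoly :: "(complex poly \<Rightarrow> complex) \<Rightarrow> nat \<Rightarrow> complex poly" where
  "opoly L 0 = 1"
| "opoly L (Suc 0) = [:- (L [:0, 1:] / L 1), 1:]"
| "opoly L (Suc (Suc n)) =
     (let Q = opoly L (Suc n); R = opoly L n;
          a = L ([:0, 1:] * Q\<^sup>2) / L (Q\<^sup>2);
          b = L (Q\<^sup>2) / L (R\<^sup>2)
      in [:- a, 1:] * Q - smult b R)"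

end

theory Submission
  imports Defs
begin

(*
  Since H is even and y_(4p+1-k) = -y_k, the moments are symmetric: mu_k = mu_(4p+1-k).
  For a polynomial A of degree <= m whose coefficients satisfy a_(m-k) = -a_k, this
  symmetry gives L[x^j A] = -L[x^(2p-j) A]; hence L[x^p A] = 0 automatically, and
  orthogonality of A to all polynomials of degree < m reduces to the p conditions
  L[x^j A] = 0, j < p, on the p+1 free coefficients a_0, ..., a_p.  A nonzero solution
  exists, and by nondegeneracy of L every polynomial of degree <= m orthogonal to all
  polynomials of degree < m is a multiple of P_m.  So P_m has antisymmetric coefficients,
  which is the identity P_m(x) = -x^m P_m(1/x).
*)

lemma homogeneous_system_nontrivial_solution:
  fixes M :: "'j \<Rightarrow> 'i \<Rightarrow> 'a::field"
  assumes "finite J" "finite I" "card J < card I"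
  shows "\<exists>c. (\<exists>i\<in>I. c i \<noteq> 0) \<and> (\<forall>j\<in>J. (\<Sum>i\<in>I. M j i * c i) = 0)"
  using assms
proof (induction J arbitrary: I M rule: finite_induct)
  case empty
  then have "I \<noteq> {}" by auto
  then show ?case by (intro exI[of _ "\<lambda>_. 1"]) auto
next
  case (insert r J)
  show ?case
  proof (cases "\<forall>i\<in>I. M r i = 0")
    case True
    with insert show ?thesis by fastforce
  next
    case False
    then obtain i0 where i0: "i0 \<in> I" "M r i0 \<noteq> 0" by auto
    define I' where "I' = I - {i0}"
    \<comment> \<open>Gaussian elimination: use equation r to eliminate the unknown i0.\<close>
    define M' where "M' j i = M j i - M j i0 / M r i0 * M r i" for j i
    have "finite I'" "card J < card I'"
      using insert i0 by (simp_all add: I'_def)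
    from insert.IH[OF this, of M'] obtain c' where
      c': "\<exists>i\<in>I'. c' i \<noteq> 0" "\<forall>j\<in>J. (\<Sum>i\<in>I'. M' j i * c' i) = 0" by auto
    define S where "S = (\<Sum>i\<in>I'. M r i * c' i)"
    define c where "c i = (if i = i0 then - S / M r i0 else c' i)" for i
    have split: "(\<Sum>i\<in>I. M j i * c i) = (\<Sum>i\<in>I'. M j i * c' i) + M j i0 * c i0" for j
    proof -
      have "(\<Sum>i\<in>I. M j i * c i) = M j i0 * c i0 + (\<Sum>i\<in>I'. M j i * c i)"
        unfolding I'_def using i0 insert.prems by (simp add: sum.remove)
      also have "(\<Sum>i\<in>I'. M j i * c i) = (\<Sum>i\<in>I'. M j i * c' i)"
        by (rule sum.cong) (auto simp: c_def I'_def)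
      finally show ?thesis by simp
    qed
    have "(\<Sum>i\<in>I. M j i * c i) = 0" if "j \<in> insert r J" for j
    proof (cases "j = r")
      case True
      then show ?thesis unfolding split using i0 by (simp add: c_def S_def)
    next
      case False
      with that have "(\<Sum>i\<in>I'. M' j i * c' i) = 0" using c'(2) by simp
      then have "(\<Sum>i\<in>I'. M j i * c' i) = M j i0 / M r i0 * S"
        by (simp add: M'_def S_def algebra_simps sum.distrib sum_distrib_left sum_subtractf)
      then show ?thesis unfolding split using i0 by (simp add: c_def)
    qed
    moreover have "\<exists>i\<in>I. c i \<noteq> 0" using c' by (auto simp: c_def I'_def)
    ultimately show ?thesis by blast
  qed
qed

lemma degree_diff_smult_monic:
  fixes F Q :: "'a::field poly"
  assumes "degree F \<le> n" "degree Q = n" "coeff Q n = 1"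
  shows "F - smult (coeff F n) Q = 0 \<or> degree (F - smult (coeff F n) Q) < n"
proof -
  have "degree (F - smult (coeff F n) Q) \<le> degree Q" "coeff (F - smult (coeff F n) Q) (degree Q) = 0"
    using assms by (auto intro: degree_diff_le order.trans[OF degree_smult_le])
  then show ?thesis using assms(2) degree_less_if_less_eqI by blast
qed

lemma poly_antipalindromic:
  fixes P :: "'a::field poly"
  assumes "degree P = m" "\<And>k. k \<le> m \<Longrightarrow> coeff P (m - k) = - coeff P k" "x \<noteq> 0"
  shows "poly P x = - (x ^ m) * poly P (1 / x)"
proof -
  have "reflect_poly P = - P"
    by (rule poly_eqI) (use assms(1,2) in \<open>auto simp: coeff_reflect_poly coeff_eq_0\<close>)
  then have "poly P x = - poly (reflect_poly P) x"
    by simp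
  also have "\<dots> = - (x ^ m) * poly P (1 / x)"
    using poly_reflect_poly_nz[OF \<open>x \<noteq> 0\<close>, of P] assms(1) by (simp add: inverse_eq_divide)
  finally show ?thesis .
qed

lemma degree_opoly: "degree (opoly L n) = n" and coeff_opoly_degree: "coeff (opoly L n) n = 1"
  for L :: "complex poly \<Rightarrow> complex"
proof -
  have "degree (opoly L n) = n \<and> coeff (opoly L n) n = 1"
  proof (induction n rule: induct_nat_012)
    case (ge2 n)
    let ?Q = "opoly L (Suc n)" and ?R = "opoly L n"
    obtain a b where P: "opoly L (Suc (Suc n)) = [:- a, 1:] * ?Q - smult b ?R"
      by (simp add: Let_def)
    from ge2 have Q: "degree ?Q = Suc n" "lead_coeff ?Q = 1" and R: "degree ?R = n"
      by auto
    then have dA: "degree ([:- a, 1:] * ?Q) = Suc (Suc n)"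
      by (subst degree_mult_eq) auto
    have lA: "lead_coeff ([:- a, 1:] * ?Q) = 1"
      unfolding lead_coeff_mult using Q by simp
    have dB: "degree (smult b ?R) < Suc (Suc n)"
      using R by (simp add: le_less_trans[OF degree_smult_le])
    have "degree (opoly L (Suc (Suc n))) = Suc (Suc n)"
      unfolding P diff_conv_add_uminus using dA dB by (subst degree_add_eq_left) auto
    moreover have "coeff (opoly L (Suc (Suc n))) (Suc (Suc n)) = 1"
      unfolding P using dA lA R by (simp add: coeff_eq_0)
    ultimately show ?case
      by simp
  qed simp_all
  then show "degree (opoly L n) = n" "coeff (opoly L n) n = 1"
    by auto
qed

locale poly_functional =
  fixes L :: "'a::field poly \<Rightarrow> 'a"
  assumes add: "L (f + g) = L f + L g"
    and smult: "L (smult c f) = c * L f"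
begin

lemma zero [simp]: "L 0 = 0"
  using smult[of 0 0] by simp

lemma diff: "L (f - g) = L f - L g"
  using add[of "f - g" g] by simp

lemma sum: "L (\<Sum>i\<in>S. f i) = (\<Sum>i\<in>S. L (f i))"
  by (induction S rule: infinite_finite_induct) (simp_all add: add)

definition orth_below :: "nat \<Rightarrow> 'a poly \<Rightarrow> bool" where
  "orth_below n Q \<longleftrightarrow> (\<forall>F. degree F < n \<longrightarrow> L (F * Q) = 0)"

lemma orth_belowD:
  assumes "orth_below n Q" "F = 0 \<or> degree F < n"
  shows "L (F * Q) = 0"
  using assms by (auto simp: orth_below_def)

lemma orth_below_0 [simp]: "orth_below 0 Q"
  by (simp add: orth_below_def)

lemma orth_below_SucI:
  assumes "orth_below n R" "degree Q = n" "coeff Q n = 1" "L (Q * R) = 0"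
  shows "orth_below (Suc n) R"
  unfolding orth_below_def
proof (intro allI impI)
  fix F :: "'a poly"
  assume "degree F < Suc n"
  define G where "G = F - smult (coeff F n) Q"
  have "G = 0 \<or> degree G < n"
    unfolding G_def using assms(2,3) \<open>degree F < Suc n\<close> by (intro degree_diff_smult_monic) auto
  then have "L (G * R) = 0"
    using assms(1) by (rule orth_belowD[rotated])
  moreover have "F * R = smult (coeff F n) (Q * R) + G * R"
    by (simp add: G_def algebra_simps)
  ultimately show "L (F * R) = 0"
    using assms(4) by (simp add: add smult)
qed

lemma orth_below_monomsI:
  assumes "\<And>j. j < n \<Longrightarrow> L (monom 1 j * Q) = 0"
  shows "orth_below n Q"
  unfolding orth_below_def
proof (intro allI impI)
  fix F :: "'a poly"
  assume F: "degree F < n"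
  have "F * Q = (\<Sum>j\<le>degree F. monom (coeff F j) j * Q)"
    by (subst (1) poly_as_sum_of_monoms[symmetric]) (simp add: sum_distrib_right)
  also have "\<dots> = (\<Sum>j\<le>degree F. smult (coeff F j) (monom 1 j * Q))"
    by (simp add: smult_monom flip: mult_smult_left)
  finally show "L (F * Q) = 0"
    using F assms by (simp add: sum smult)
qed

lemma orth_below_three_term:
  assumes Q0: "degree Q0 = n" "coeff Q0 n = 1" "orth_below n Q0" "L (Q0\<^sup>2) \<noteq> 0"
    and Q1: "degree Q1 = Suc n" "coeff Q1 (Suc n) = 1" "orth_below (Suc n) Q1" "L (Q1\<^sup>2) \<noteq> 0"
  shows "orth_below (Suc (Suc n))
    ([:- (L ([:0, 1:] * Q1\<^sup>2) / L (Q1\<^sup>2)), 1:] * Q1 - smult (L (Q1\<^sup>2) / L (Q0\<^sup>2)) Q0)"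
proof -
  define a where "a = L ([:0, 1:] * Q1\<^sup>2) / L (Q1\<^sup>2)"
  define b where "b = L (Q1\<^sup>2) / L (Q0\<^sup>2)"
  define R where "R = [:- a, 1:] * Q1 - smult b Q0"
  have Q0_Q1: "L (Q0 * Q1) = 0"
    using Q1(3) by (rule orth_belowD) (simp add: Q0(1))
  have L_R: "L (F * R) = L (([:0, 1:] * F) * Q1) - a * L (F * Q1) - b * L (F * Q0)" for F
  proof -
    have "F * R = ([:0, 1:] * F) * Q1 - smult a (F * Q1) - smult b (F * Q0)"
      by (simp add: R_def algebra_simps)
    then show ?thesis
      by (simp add: diff smult)
  qed
  have "orth_below n R"
    unfolding orth_below_def
  proof (intro allI impI)
    fix F :: "'a poly"
    assume "degree F < n"
    then have "[:0, 1:] * F = 0 \<or> degree ([:0, 1:] * F) < Suc n"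
      by (cases "F = 0") (simp_all add: degree_mult_eq)
    then have "L (([:0, 1:] * F) * Q1) = 0"
      using Q1(3) by (rule orth_belowD[rotated])
    moreover have "L (F * Q1) = 0" "L (F * Q0) = 0"
      using \<open>degree F < n\<close> Q0(3) Q1(3) by (simp_all add: orth_belowD)
    ultimately show "L (F * R) = 0"
      by (simp only: L_R) simp
  qed
  moreover have "L (Q0 * R) = 0"
  proof -
    have x_Q0: "degree ([:0, 1:] * Q0) \<le> Suc n" "coeff ([:0, 1:] * Q0) (Suc n) = 1"
      using Q0(1,2) by (auto intro: degree_pCons_le)
    then have "[:0, 1:] * Q0 - Q1 = 0 \<or> degree ([:0, 1:] * Q0 - Q1) < Suc n"
      using degree_diff_smult_monic[OF x_Q0(1) Q1(1,2)] by simp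
    then have "L (([:0, 1:] * Q0 - Q1) * Q1) = 0"
      using Q1(3) by (rule orth_belowD[rotated])
    then have "L (([:0, 1:] * Q0) * Q1) = L (Q1\<^sup>2)"
      by (simp add: left_diff_distrib diff power2_eq_square)
    then show ?thesis
      using Q0_Q1 Q0(4) by (simp add: L_R b_def power2_eq_square)
  qed
  moreover have "L (Q1 * R) = 0"
  proof -
    have "L (([:0, 1:] * Q1) * Q1) = a * L (Q1 * Q1)"
      using Q1(4) by (simp add: a_def power2_eq_square mult.assoc)
    then show ?thesis
      using Q0_Q1 by (simp add: L_R mult.commute[of Q1 Q0])
  qed
  ultimately have "orth_below (Suc (Suc n)) R"
    using orth_below_SucI[of n R Q0] orth_below_SucI[of "Suc n" R Q1] Q0(1,2) Q1(1,2) by simp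
  then show ?thesis
    by (simp add: R_def a_def b_def)
qed

end

lemma
  fixes p :: nat and c :: "nat \<Rightarrow> 'a::comm_ring_1"
  defines "A \<equiv> (\<Sum>i\<le>p. smult (c i) (monom 1 i - monom 1 (2*p+1-i)))"
  shows degree_antipalindromic_sum: "degree A \<le> 2*p+1"
    and coeff_antipalindromic_sum_reflect: "k \<le> 2*p+1 \<Longrightarrow> coeff A (2*p+1-k) = - coeff A k"
    and coeff_antipalindromic_sum: "i \<le> p \<Longrightarrow> coeff A i = c i"
proof -
  have coeff_A: "coeff A k =
      (\<Sum>i\<le>p. c i * ((if i = k then 1 else 0) - (if 2*p+1-i = k then 1 else 0)))" for k
    by (simp add: A_def coeff_sum coeff_monom)
  show "degree A \<le> 2*p+1"
    unfolding A_def
    by (intro degree_sum_le order.trans[OF degree_smult_le] degree_diff_le order.trans[OF degree_monom_le])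
      auto
  show "coeff A (2*p+1-k) = - coeff A k" if "k \<le> 2*p+1"
    unfolding coeff_A sum_negf[symmetric] by (rule sum.cong) (use that in auto)
  show "coeff A i = c i" if "i \<le> p"
  proof -
    have "coeff A i = (\<Sum>i'\<le>p. if i' = i then c i' else 0)"
      unfolding coeff_A by (rule sum.cong) (use that in auto)
    with that show ?thesis
      by simp
  qed
qed

lemma antipalindromic_orth_below_exists:
  fixes L :: "'a::field_char_0 poly \<Rightarrow> 'a"
  assumes "poly_functional L"
    and sym: "\<And>k. k \<le> 4*p+1 \<Longrightarrow> L (monom 1 (4*p+1-k)) = L (monom 1 k)"
  shows "\<exists>A. A \<noteq> 0 \<and> degree A \<le> 2*p+1 \<and> (\<forall>k\<le>2*p+1. coeff A (2*p+1-k) = - coeff A k)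
           \<and> poly_functional.orth_below L (2*p+1) A"
proof -
  interpret poly_functional L by fact
  define m where "m = 2*p+1"
  define B where "B i = monom 1 i - monom (1::'a) (m - i)" for i
  define e where "e j i = L (monom 1 j * B i)" for j i
  have e_eq: "e j i = L (monom 1 (j+i)) - L (monom 1 (j+(m-i)))" for j i
    by (simp add: e_def B_def right_diff_distrib mult_monom diff)
  have e_reflect: "e (2*p-j) i = - e j i" if "j \<le> 2*p" "i \<le> p" for j i
  proof -
    have "L (monom 1 (2*p-j+i)) = L (monom 1 (j+(m-i)))"
      using sym[of "j+(m-i)"] that by (simp add: m_def)
    moreover have "L (monom 1 (2*p-j+(m-i))) = L (monom 1 (j+i))"
      using sym[of "j+i"] that by (simp add: m_def)
    ultimately show ?thesis
      by (simp add: e_eq)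
  qed
  obtain c where c: "\<exists>i\<in>{..p}. c i \<noteq> 0" "\<forall>j\<in>{..<p}. (\<Sum>i\<le>p. e j i * c i) = 0"
    using homogeneous_system_nontrivial_solution[of "{..<p}" "{..p}" e] by auto
  define A where "A = (\<Sum>i\<le>p. smult (c i) (B i))"
  have LA: "L (monom 1 j * A) = (\<Sum>i\<le>p. e j i * c i)" for j
    by (simp add: A_def e_def sum_distrib_left sum smult mult.commute)
  have LA_reflect: "L (monom 1 (2*p-j) * A) = - L (monom 1 j * A)" if "j \<le> 2*p" for j
    using that by (simp add: LA e_reflect sum_negf)
  have "L (monom 1 j * A) = 0" if "j < m" for j
  proof -
    consider "j < p" | "j = p" | "p < j" "j \<le> 2*p"
      using \<open>j < m\<close> unfolding m_def by linarith
    then show ?thesis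
    proof cases
      case 1
      then show ?thesis using c(2) by (simp add: LA)
    next
      case 2
      \<comment> \<open>The only place where characteristic 0 is needed: here LA_reflect reads s = - s.\<close>
      then show ?thesis using LA_reflect[of p] by simp
    next
      case 3
      then have "L (monom 1 (2*p-j) * A) = 0" using c(2) by (simp add: LA)
      then show ?thesis using LA_reflect[of j] 3 by simp
    qed
  qed
  then have "orth_below m A"
    by (rule orth_below_monomsI)
  moreover have "A \<noteq> 0"
  proof
    assume "A = 0"
    obtain i where "i \<le> p" "c i \<noteq> 0" using c(1) by auto
    then show False
      using coeff_antipalindromic_sum[where p = p and c = c] \<open>A = 0\<close> by (simp add: A_def B_def m_def)
  qed
  moreover have "degree A \<le> m" "\<forall>k\<le>m. coeff A (m-k) = - coeff A k"
    using degree_antipalindromic_sum[where p = p and c = c] coeff_antipalindromic_sum_reflect[where p = p and c = c]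
    by (simp_all add: A_def B_def m_def)
  ultimately show ?thesis
    using \<open>orth_below m A\<close> unfolding m_def by blast
qed

locale complex_poly_functional = poly_functional L for L :: "complex poly \<Rightarrow> complex"
begin

lemma orth_below_opoly:
  assumes "\<And>k. k < n \<Longrightarrow> L ((opoly L k)\<^sup>2) \<noteq> 0"
  shows "orth_below n (opoly L n)"
  using assms
proof (induction n rule: induct_nat_012)
  case 0
  show ?case by simp
next
  case 1
  define a where "a = L [:0, 1:] / L 1"
  have "L 1 \<noteq> 0"
    using 1[of 0] by simp
  moreover have "L [:- a, 1:] = L [:0, 1:] - a * L 1"
    using diff[of "[:0, 1:]" "smult a 1"] smult[of a 1] by simp
  ultimately have "L [:- a, 1:] = 0"
    by (simp add: a_def)
  then have "orth_below (Suc 0) [:- a, 1:]"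
    by (intro orth_below_SucI[where Q = 1]) simp_all
  then show ?case
    by (simp add: a_def)
next
  case (ge2 n)
  then have "orth_below n (opoly L n)" "orth_below (Suc n) (opoly L (Suc n))"
    and "L ((opoly L n)\<^sup>2) \<noteq> 0" "L ((opoly L (Suc n))\<^sup>2) \<noteq> 0"
    by simp_all
  then show ?case
    unfolding opoly.simps(3) Let_def
    by (intro orth_below_three_term) (simp_all add: degree_opoly coeff_opoly_degree)
qed

lemma orth_below_eq_0:
  assumes nondeg: "\<And>k. k < n \<Longrightarrow> L ((opoly L k)\<^sup>2) \<noteq> 0"
    and "degree D < n" "orth_below n D"
  shows "D = 0"
proof (rule ccontr)
  assume "D \<noteq> 0"
  define d where "d = degree D"
  let ?P = "opoly L d"
  define D' where "D' = D - smult (lead_coeff D) ?P"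
  have "D' = 0 \<or> degree D' < d"
    unfolding D'_def d_def by (rule degree_diff_smult_monic) (simp_all add: degree_opoly coeff_opoly_degree)
  then have "L (D' * ?P) = 0"
    using orth_below_opoly[of d] nondeg \<open>degree D < n\<close> by (intro orth_belowD) (auto simp: d_def)
  moreover have "L (?P * D) = 0"
    using \<open>orth_below n D\<close> by (rule orth_belowD) (simp add: degree_opoly d_def \<open>degree D < n\<close>)
  moreover have "?P * D = smult (lead_coeff D) (?P\<^sup>2) + D' * ?P"
    by (simp add: D'_def algebra_simps power2_eq_square)
  ultimately have "lead_coeff D * L (?P\<^sup>2) = 0"
    by (simp add: add smult)
  then show False
    using \<open>D \<noteq> 0\<close> nondeg \<open>degree D < n\<close> by (simp add: d_def)
qed

lemma orth_below_eq_smult_opoly: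
  assumes nondeg: "\<And>k. k < n \<Longrightarrow> L ((opoly L k)\<^sup>2) \<noteq> 0"
    and "degree A \<le> n" "orth_below n A"
  shows "A = smult (coeff A n) (opoly L n)"
proof -
  define D where "D = A - smult (coeff A n) (opoly L n)"
  have "D = 0 \<or> degree D < n"
    unfolding D_def using \<open>degree A \<le> n\<close>
    by (rule degree_diff_smult_monic) (simp_all add: degree_opoly coeff_opoly_degree)
  moreover have "orth_below n D"
    using \<open>orth_below n A\<close> orth_below_opoly[OF nondeg]
    by (simp add: orth_below_def D_def right_diff_distrib diff smult mult_smult_right)
  ultimately have "D = 0"
    using orth_below_eq_0[OF nondeg] by auto
  then show ?thesis
    by (simp add: D_def)
qed

lemma opoly_antipalindromic:
  assumes sym: "\<And>k. k \<le> 4*p+1 \<Longrightarrow> L (monom 1 (4*p+1-k)) = L (monom 1 k)"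
    and nondeg: "\<And>k. k \<le> 2*p \<Longrightarrow> L ((opoly L k)\<^sup>2) \<noteq> 0"
    and "k \<le> 2*p+1"
  shows "coeff (opoly L (2*p+1)) (2*p+1-k) = - coeff (opoly L (2*p+1)) k"
proof -
  obtain A where A: "A \<noteq> 0" "degree A \<le> 2*p+1" "\<forall>k\<le>2*p+1. coeff A (2*p+1-k) = - coeff A k"
      "orth_below (2*p+1) A"
    using antipalindromic_orth_below_exists[OF poly_functional_axioms sym] by blast
  define c where "c = coeff A (2*p+1)"
  have A_eq: "A = smult c (opoly L (2*p+1))"
    unfolding c_def using nondeg A(2,4) by (intro orth_below_eq_smult_opoly) auto
  with A(1) have "c \<noteq> 0"
    by auto
  moreover have "c * coeff (opoly L (2*p+1)) (2*p+1-k) = c * - coeff (opoly L (2*p+1)) k"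
    using A(3) \<open>k \<le> 2*p+1\<close> by (metis A_eq coeff_smult mult_minus_right)
  ultimately show ?thesis
    using mult_left_cancel by blast
qed

end

lemma Lfun_eq_sum:
  assumes "degree q \<le> M"
  shows "Lfun p q = (\<Sum>k\<le>M. coeff q k * moment p k)"
  unfolding Lfun_def
  by (rule sum.mono_neutral_left) (use assms in \<open>auto simp: coeff_eq_0\<close>)

interpretation Lfun: complex_poly_functional "Lfun p"
proof
  fix f g :: "complex poly" and c :: complex
  let ?M = "max (degree f) (degree g)"
  show "Lfun p (f + g) = Lfun p f + Lfun p g"
    using degree_add_le[of f ?M g]
    by (simp add: Lfun_eq_sum[of _ ?M] Lfun_eq_sum[of f ?M] Lfun_eq_sum[of g ?M] distrib_right sum.distrib)
  show "Lfun p (smult c f) = c * Lfun p f"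
    using Lfun_eq_sum[of "smult c f" "degree f" p] Lfun_eq_sum[of f "degree f" p]
    by (simp add: sum_distrib_left mult.assoc)
qed

lemma Lfun_monom: "Lfun p (monom c k) = c * moment p k"
  by (simp add: Lfun_eq_sum[of _ k] degree_monom_le coeff_monom
      if_distrib[of "\<lambda>x. x * moment p _"] sum.delta cong: if_cong)

lemma moment_reflect:
  assumes "k \<le> 4*p+1"
  shows "moment p (4*p+1-k) = moment p k"
proof -
  have "ynode p (4*p+1-k) = - ynode p k"
    using assms by (simp add: ynode_def of_nat_diff field_simps)
  then show ?thesis
    by (simp add: moment_def H_def)
qed

theorem proposition1:
  fixes p :: nat
  assumes "p \<ge> 1"
    and "\<And>n. n \<le> 2 * p \<Longrightarrow> Lfun p ((opoly (Lfun p) n)\<^sup>2) \<noteq> 0"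
  shows "\<forall>x::complex. x \<noteq> 0 \<longrightarrow>
           poly (opoly (Lfun p) (2 * p + 1)) x
             = - (x ^ (2 * p + 1)) * poly (opoly (Lfun p) (2 * p + 1)) (1 / x)"
proof (intro allI impI)
  fix x :: complex
  assume "x \<noteq> 0"
  have "\<And>k. k \<le> 2*p+1 \<Longrightarrow>
      coeff (opoly (Lfun p) (2*p+1)) (2*p+1-k) = - coeff (opoly (Lfun p) (2*p+1)) k"
    by (rule Lfun.opoly_antipalindromic) (use moment_reflect assms(2) in \<open>simp_all add: Lfun_monom\<close>)
  then show "poly (opoly (Lfun p) (2 * p + 1)) x
      = - (x ^ (2 * p + 1)) * poly (opoly (Lfun p) (2 * p + 1)) (1 / x)"
    using \<open>x \<noteq> 0\<close> by (intro poly_antipalindromic) (simp_all add: degree_opoly)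
qed

end
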